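(* Let $r\ge 3$ and let $G$ be a graph of order $n$ containing no complete subgraph $K_{r+1}$. Then $q_n(G)<\left(1-\frac{3}{3r-1}\right)n$, where $q_n(G)$ is the smallest eigenvalue of the signless Laplacian of $G$.
   Context: Graphs are finite and simple with $n\ge 1$ vertices. For a graph $G$ with adjacency matrix $A$ and diagonal degree matrix $D$, the signless Laplacian is $Q(G)=D+A$; $q_n(G)$ is its smallest eigenvalue. *)

theory Defs
  imports "HOL-Analysis.Analysis"
begin

text \<open>A finite simple graph on the vertex type 'n (n = CARD('n) vertices),
given by a symmetric irreflexive adjacency relation.\<close>

definition simple_graph :: "('n::finite \<Rightarrow> 'n \<Rightarrow> bool) \<Rightarrow> bool" where
  "simple_graph E \<longleftrightarrow> (\<forall>i j. E i j \<longrightarrow> E j i) \<and> (\<forall>i. \<not> E i i)"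

definition degree :: "('n::finite \<Rightarrow> 'n \<Rightarrow> bool) \<Rightarrow> 'n \<Rightarrow> nat" where
  "degree E i = card {j. E i j}"

definition adj_matrix :: "('n::finite \<Rightarrow> 'n \<Rightarrow> bool) \<Rightarrow> real^'n^'n" where
  "adj_matrix E = (\<chi> i j. if E i j then 1 else 0)"

definition deg_matrix :: "('n::finite \<Rightarrow> 'n \<Rightarrow> bool) \<Rightarrow> real^'n^'n" where
  "deg_matrix E = (\<chi> i j. if i = j then real (degree E i) else 0)"

definition signless_laplacian :: "('n::finite \<Rightarrow> 'n \<Rightarrow> bool) \<Rightarrow> real^'n^'n" where
  "signless_laplacian E = deg_matrix E + adj_matrix E"

definition is_eigenvalue :: "real^'n^'n \<Rightarrow> real \<Rightarrow> bool" where
  "is_eigenvalue M c \<longleftrightarrow> (\<exists>v. v \<noteq> 0 \<and> M *v v = c *\<^sub>R v)"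

definition q_min :: "('n::finite \<Rightarrow> 'n \<Rightarrow> bool) \<Rightarrow> real" where
  "q_min E = Min {c. is_eigenvalue (signless_laplacian E) c}"

definition contains_clique :: "('n::finite \<Rightarrow> 'n \<Rightarrow> bool) \<Rightarrow> nat \<Rightarrow> bool" where
  "contains_clique E k \<longleftrightarrow> (\<exists>S. card S = k \<and> (\<forall>x\<in>S. \<forall>y\<in>S. x \<noteq> y \<longrightarrow> E x y))"

end

theory Submission
  imports Defs
begin

text \<open>
  Test vectors bound q_n from above via the Rayleigh quotient. Let K be a maximum clique, of size
  s \<le> r, and for k \<in> K let V_k be the set of vertices adjacent to all of K except k; each V_k
  is independent and contains k, and the V_k are pairwise disjoint. The unit vectors give
  q_n \<le> d(k), and a vertex outside all V_k has at most s - 2 neighbours in K, so summing over K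
  gives s q_n \<le> (s - 2) n + \<Sum>|V_k|. The vector 1_{V_k} - 1_{V_j} gives
  q_n \<le> n - |V_k| - |V_j|, and summing over pairs gives s q_n \<le> s n - 2 \<Sum>|V_k|. Hence
  3 s q_n \<le> (3 s - 4) n, i.e. q_n \<le> (1 - 4/(3s)) n \<le> (1 - 4/(3r)) n < (1 - 3/(3r - 1)) n.
\<close>

lemma inner_matrix_vector_symmetric:
  fixes M :: "real^'n^'n"
  assumes "transpose M = M"
  shows "x \<bullet> (M *v y) = y \<bullet> (M *v x)"
  by (metis assms dot_lmul_matrix inner_commute vector_transpose_matrix)

lemma quadratic_form_minimiser_is_eigenvector:
  fixes M :: "real^'n^'n"
  assumes symm: "transpose M = M"
    and lower: "\<And>x. c * (x \<bullet> x) \<le> x \<bullet> (M *v x)"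
    and attained: "x0 \<bullet> (M *v x0) = c * (x0 \<bullet> x0)"
  shows "M *v x0 = c *\<^sub>R x0"
proof (rule ccontr)
  define g where "g z = z \<bullet> (M *v z) - c * (z \<bullet> z)" for z
  define y where "y = M *v x0 - c *\<^sub>R x0"
  assume "M *v x0 \<noteq> c *\<^sub>R x0"
  then have yy: "y \<bullet> y > 0" by (simp add: y_def)
  have g_nonneg: "0 \<le> g z" for z using lower[of z] by (simp add: g_def)
  \<comment> \<open>g is a nonnegative quadratic form vanishing at x0, so its gradient 2y at x0 must vanish\<close>
  have g_line: "g (x0 + t *\<^sub>R y) = 2 * t * (y \<bullet> y) + t\<^sup>2 * g y" for t
  proof -
    have "y \<bullet> (M *v x0) = y \<bullet> y + c * (y \<bullet> x0)"
      by (simp add: y_def inner_diff_right)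
    then show ?thesis
      using attained inner_matrix_vector_symmetric[OF symm, of x0 y]
      by (simp add: g_def matrix_vector_right_distrib matrix_vector_mult_scaleR inner_add_left
          inner_add_right inner_commute algebra_simps power2_eq_square)
  qed
  define t where "t = (y \<bullet> y) / (g y + 1)"
  have t: "t > 0" "t * g y < y \<bullet> y"
    using yy g_nonneg[of y] by (auto simp: t_def field_simps)
  have "0 \<le> -2 * t * (y \<bullet> y) + t\<^sup>2 * g y"
    using g_nonneg[of "x0 + (-t) *\<^sub>R y"] g_line[of "-t"] by simp
  then have "2 * (y \<bullet> y) \<le> t * g y"
    using t(1) by (simp add: power2_eq_square algebra_simps)
  then show False using t(2) yy by linarith
qed

lemma symmetric_matrix_least_Rayleigh_eigenvalue:
  fixes M :: "real^'n^'n"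
  assumes symm: "transpose M = M"
  obtains c where "is_eigenvalue M c" and "\<And>x. c * (x \<bullet> x) \<le> x \<bullet> (M *v x)"
proof -
  define f where "f x = x \<bullet> (M *v x)" for x
  have "continuous_on (sphere 0 1) f"
    unfolding f_def by (intro continuous_intros)
  moreover have "sphere (0::real^'n) 1 \<noteq> {}"
    using vector_choose_size[of 1] by fastforce
  ultimately obtain x0 where x0: "x0 \<in> sphere 0 1" and min: "\<And>y. y \<in> sphere 0 1 \<Longrightarrow> f x0 \<le> f y"
    using continuous_attains_inf[OF compact_sphere] by blast
  have x0_unit: "x0 \<bullet> x0 = 1"
    using x0 by (simp add: norm_eq_1)
  have lower: "f x0 * (x \<bullet> x) \<le> f x" for x
  proof (cases "x = 0")
    case False
    have "f x0 \<le> f ((1 / norm x) *\<^sub>R x)"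
      using False by (intro min) simp
    also have "\<dots> = f x / (x \<bullet> x)"
      by (simp add: f_def matrix_vector_mult_scaleR power2_norm_eq_inner[symmetric] power2_eq_square)
    finally show ?thesis using False by (simp add: field_simps)
  qed (simp add: f_def)
  have "M *v x0 = f x0 *\<^sub>R x0"
    using lower x0_unit unfolding f_def
    by (intro quadratic_form_minimiser_is_eigenvector[OF symm]) auto
  moreover have "x0 \<noteq> 0" using x0 by auto
  ultimately have "is_eigenvalue M (f x0)"
    unfolding is_eigenvalue_def by blast
  with lower show ?thesis unfolding f_def using that by blast
qed

lemma finite_eigenvalues_symmetric:
  fixes M :: "real^'n^'n"
  assumes symm: "transpose M = M"
  shows "finite {c. is_eigenvalue M c}"
proof -
  define C where "C = {c. is_eigenvalue M c}"
  define v where "v c = (SOME v. v \<noteq> 0 \<and> M *v v = c *\<^sub>R v)" for c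
  have v: "v c \<noteq> 0" "M *v v c = c *\<^sub>R v c" if "c \<in> C" for c
    using that someI_ex[of "\<lambda>v. v \<noteq> 0 \<and> M *v v = c *\<^sub>R v"]
    unfolding C_def is_eigenvalue_def v_def by auto
  have "inj_on v C"
  proof (rule inj_onI)
    fix a b assume "a \<in> C" "b \<in> C" "v a = v b"
    then have "a *\<^sub>R v a = b *\<^sub>R v a" using v by metis
    with v(1)[OF \<open>a \<in> C\<close>] show "a = b" by (simp add: scaleR_cancel_right)
  qed
  moreover have "pairwise orthogonal (v ` C)"
  proof (clarsimp simp: pairwise_def orthogonal_def)
    fix a b assume a: "a \<in> C" and b: "b \<in> C" and "v a \<noteq> v b"
    then have "a \<noteq> b" by auto
    have "b * (v a \<bullet> v b) = a * (v a \<bullet> v b)"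
      using inner_matrix_vector_symmetric[OF symm, of "v a" "v b"] v[OF a] v[OF b]
      by (simp add: inner_commute)
    with \<open>a \<noteq> b\<close> show "v a \<bullet> v b = 0" by simp
  qed
  moreover have "0 \<notin> v ` C" using v by auto
  ultimately have "finite (v ` C)" and "inj_on v C"
    using pairwise_orthogonal_independent independent_bound by blast+
  then show ?thesis unfolding C_def[symmetric] using finite_imageD by blast
qed

lemma Min_eigenvalue_le_Rayleigh:
  fixes M :: "real^'n^'n"
  assumes "transpose M = M"
  shows "Min {c. is_eigenvalue M c} * (x \<bullet> x) \<le> x \<bullet> (M *v x)"
proof -
  obtain c where "is_eigenvalue M c" and "c * (x \<bullet> x) \<le> x \<bullet> (M *v x)"
    using symmetric_matrix_least_Rayleigh_eigenvalue[OF assms] by metis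
  moreover have "Min {c. is_eigenvalue M c} \<le> c"
    using finite_eigenvalues_symmetric[OF assms] \<open>is_eigenvalue M c\<close> by (intro Min_le) auto
  ultimately show ?thesis
    by (meson inner_ge_zero mult_right_mono order_trans)
qed

lemma signless_laplacian_symmetric:
  assumes "simple_graph E"
  shows "transpose (signless_laplacian E) = signless_laplacian E"
  using assms
  unfolding simple_graph_def signless_laplacian_def deg_matrix_def adj_matrix_def transpose_def
  by (auto simp: vec_eq_iff)

lemma q_min_le_Rayleigh:
  assumes "simple_graph E"
  shows "q_min E * (x \<bullet> x) \<le> x \<bullet> (signless_laplacian E *v x)"
  unfolding q_min_def
  by (rule Min_eigenvalue_le_Rayleigh[OF signless_laplacian_symmetric[OF assms]])

lemma signless_laplacian_quadratic_form:
  "x \<bullet> (signless_laplacian E *v x) = (\<Sum>i\<in>UNIV. \<Sum>j\<in>{j. E i j}. x$i * (x$i + x$j))"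
proof -
  have "(signless_laplacian E *v x) $ i = real (degree E i) * x$i + (\<Sum>j\<in>{j. E i j}. x$j)" for i
  proof -
    have "(signless_laplacian E *v x) $ i
        = (\<Sum>j\<in>UNIV. if j = i then real (degree E i) * x$j else 0) + (\<Sum>j\<in>UNIV. if E i j then x$j else 0)"
      unfolding signless_laplacian_def deg_matrix_def adj_matrix_def matrix_vector_mult_def
      by (simp add: distrib_right sum.distrib eq_commute[of i] if_distrib[of "\<lambda>a. a * _"] cong: if_cong)
    then show ?thesis by (simp add: sum.inter_filter[symmetric])
  qed
  then show ?thesis
    by (simp add: inner_vec_def degree_def distrib_left sum.distrib sum_distrib_left algebra_simps)
qed

lemma q_min_le_degree:
  assumes "simple_graph E"
  shows "q_min E \<le> real (degree E v)"
proof -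
  have "\<not> E v v" using assms by (simp add: simple_graph_def)
  then have "(\<Sum>j\<in>{j. E i j}. axis v 1 $ i * (axis v 1 $ i + axis v (1::real) $ j))
      = (if i = v then real (degree E v) else 0)" for i
  proof (cases "i = v")
    case True
    then have "(\<Sum>j\<in>{j. E i j}. axis v 1 $ i * (axis v 1 $ i + axis v (1::real) $ j))
        = (\<Sum>j\<in>{j. E v j}. 1)"
      using \<open>\<not> E v v\<close> by (intro sum.cong) (auto simp: axis_def)
    with True show ?thesis by (simp add: degree_def)
  qed (simp add: axis_def)
  then have "axis v 1 \<bullet> (signless_laplacian E *v axis v 1) = real (degree E v)"
    by (simp add: signless_laplacian_quadratic_form)
  then show ?thesis
    using q_min_le_Rayleigh[OF assms, of "axis v 1"] by (simp add: inner_axis_axis)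
qed

definition signed_indicator :: "'n::finite set \<Rightarrow> 'n set \<Rightarrow> real^'n" where
  "signed_indicator A B = (\<chi> i. if i \<in> A then 1 else if i \<in> B then -1 else 0)"

lemma q_min_le_independent_pair:
  fixes E :: "'n::finite \<Rightarrow> 'n \<Rightarrow> bool"
  assumes G: "simple_graph E" and disj: "A \<inter> B = {}" and ne: "A \<union> B \<noteq> {}"
    and indep_A: "\<And>u w. u \<in> A \<Longrightarrow> w \<in> A \<Longrightarrow> \<not> E u w"
    and indep_B: "\<And>u w. u \<in> B \<Longrightarrow> w \<in> B \<Longrightarrow> \<not> E u w"
  shows "q_min E \<le> real CARD('n) - real (card A) - real (card B)"
proof -
  define x where "x = signed_indicator A B"
  define R where "R = - (A \<union> B)"
  have card_AB: "real (card (A \<union> B)) = real (card A) + real (card B)"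
    using disj by (simp add: card_Un_disjoint)
  have card_R: "real (card R) = real CARD('n) - real (card A) - real (card B)"
    using card_AB by (simp add: R_def Compl_eq_Diff_UNIV card_Diff_subset of_nat_diff card_mono)
  have norm: "x \<bullet> x = real (card (A \<union> B))"
  proof -
    have "x \<bullet> x = (\<Sum>i\<in>UNIV. if i \<in> A \<union> B then 1 else 0)"
      unfolding inner_vec_def x_def signed_indicator_def by (rule sum.cong) auto
    then show ?thesis by (simp add: sum.If_cases Collect_disj_eq)
  qed
  \<comment> \<open>an edge contributes 1 if it leaves A \<union> B and 0 if it joins A to B\<close>
  have row: "(\<Sum>j\<in>{j. E i j}. x$i * (x$i + x$j)) \<le> (if i \<in> A \<union> B then real (card R) else 0)" for i
  proof (cases "i \<in> A \<union> B")
    case True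
    have "(\<Sum>j\<in>{j. E i j}. x$i * (x$i + x$j)) \<le> (\<Sum>j\<in>{j. E i j}. if j \<in> R then 1 else 0)"
      using True indep_A indep_B disj by (intro sum_mono) (auto simp: x_def signed_indicator_def R_def)
    also have "\<dots> \<le> (\<Sum>j\<in>UNIV. if j \<in> R then 1 else 0)"
      by (rule sum_mono2) auto
    finally show ?thesis using True by (simp add: sum.If_cases)
  qed (simp add: x_def signed_indicator_def)
  have "q_min E * real (card (A \<union> B)) \<le> x \<bullet> (signless_laplacian E *v x)"
    using q_min_le_Rayleigh[OF G, of x] norm by simp
  also have "\<dots> \<le> (\<Sum>i\<in>UNIV. if i \<in> A \<union> B then real (card R) else 0)"
    unfolding signless_laplacian_quadratic_form by (rule sum_mono) (rule row)
  also have "\<dots> = real (card (A \<union> B)) * real (card R)"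
    by (simp add: sum.If_cases Collect_disj_eq)
  finally show ?thesis
    using ne card_R by (simp add: card_gt_0_iff)
qed

lemma sum_degree_eq_sum_card_neighbours:
  fixes E :: "'n::finite \<Rightarrow> 'n \<Rightarrow> bool"
  assumes "simple_graph E"
  shows "(\<Sum>k\<in>K. degree E k) = (\<Sum>u\<in>UNIV. card {k\<in>K. E u k})"
proof -
  have "(\<Sum>k\<in>K. degree E k) = (\<Sum>k\<in>K. \<Sum>u\<in>UNIV. if E k u then 1 else 0)"
    by (simp add: degree_def sum.If_cases)
  also have "\<dots> = (\<Sum>u\<in>UNIV. \<Sum>k\<in>K. if E k u then 1 else 0)"
    by (rule sum.swap)
  also have "\<dots> = (\<Sum>u\<in>UNIV. \<Sum>k\<in>K. if E u k then 1 else 0)"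
  proof -
    have "E k u \<longleftrightarrow> E u k" for k u
      using assms unfolding simple_graph_def by blast
    then show ?thesis by simp
  qed
  also have "\<dots> = (\<Sum>u\<in>UNIV. card {k\<in>K. E u k})"
    by (cases "finite K") (simp_all add: sum.If_cases Int_def)
  finally show ?thesis .
qed

lemma sum_over_distinct_pairs_bound:
  fixes a :: "'a \<Rightarrow> real" and b c :: real
  assumes "finite K" and "2 \<le> card K"
    and pair: "\<And>k j. k \<in> K \<Longrightarrow> j \<in> K \<Longrightarrow> k \<noteq> j \<Longrightarrow> c \<le> b - a k - a j"
  shows "card K * c \<le> card K * b - 2 * sum a K"
proof -
  define s where "s = real (card K)"
  have card_minus: "real (card K - Suc 0) = s - 1"
    using assms(2) by (simp add: s_def of_nat_diff)
  have "(s - 1) * (s * c) = (\<Sum>k\<in>K. \<Sum>j\<in>K - {k}. c)"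
    using assms(1) card_minus by (simp add: s_def)
  also have "\<dots> \<le> (\<Sum>k\<in>K. \<Sum>j\<in>K - {k}. b - a k - a j)"
    by (intro sum_mono) (auto intro: pair)
  also have "\<dots> = (\<Sum>k\<in>K. ((s - 1) * b - sum a K) - (s - 2) * a k)"
  proof (intro sum.cong refl)
    fix k assume "k \<in> K"
    then have "(\<Sum>j\<in>K - {k}. b - a k - a j) = (s - 1) * (b - a k) - (sum a K - a k)"
      using assms(1) card_minus by (simp add: sum_subtractf sum_diff1)
    then show "(\<Sum>j\<in>K - {k}. b - a k - a j) = ((s - 1) * b - sum a K) - (s - 2) * a k"
      by (simp add: algebra_simps)
  qed
  also have "\<dots> = s * ((s - 1) * b - sum a K) - (s - 2) * sum a K"
    by (simp add: sum_subtractf sum_distrib_left[symmetric] s_def)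
  also have "\<dots> = (s - 1) * (s * b - 2 * sum a K)"
    by (simp add: algebra_simps)
  finally show ?thesis
    using assms(2) by (simp add: s_def)
qed

definition is_clique :: "('n \<Rightarrow> 'n \<Rightarrow> bool) \<Rightarrow> 'n set \<Rightarrow> bool" where
  "is_clique E S \<longleftrightarrow> (\<forall>x\<in>S. \<forall>y\<in>S. x \<noteq> y \<longrightarrow> E x y)"

lemma card_clique_le:
  fixes E :: "'n::finite \<Rightarrow> 'n \<Rightarrow> bool"
  assumes "\<not> contains_clique E (r + 1)" and "is_clique E S"
  shows "card S \<le> r"
proof (rule ccontr)
  assume "\<not> card S \<le> r"
  then obtain S' where "S' \<subseteq> S" "card S' = r + 1"
    using obtain_subset_with_card_n[of "r + 1" S] by force
  with assms show False
    unfolding contains_clique_def is_clique_def by blast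
qed

lemma obtain_maximum_clique:
  fixes E :: "'n::finite \<Rightarrow> 'n \<Rightarrow> bool"
  obtains K where "is_clique E K" and "\<And>S. is_clique E S \<Longrightarrow> card S \<le> card K"
proof -
  have "finite (card ` {S. is_clique E S})" and "{} \<in> {S. is_clique E S}"
    by (simp_all add: is_clique_def)
  then obtain K where "is_clique E K" "card K = Max (card ` {S. is_clique E S})"
    using Max_in[of "card ` {S. is_clique E S}"] by fastforce
  moreover have "card S \<le> Max (card ` {S. is_clique E S})" if "is_clique E S" for S
    using \<open>finite (card ` {S. is_clique E S})\<close> that by (intro Max_ge) auto
  ultimately show ?thesis
    using that by simp
qed

locale maximum_clique =
  fixes E :: "'n::finite \<Rightarrow> 'n \<Rightarrow> bool" and K :: "'n set"
  assumes simple: "simple_graph E"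
    and clique: "is_clique E K"
    and maximum: "\<And>S. is_clique E S \<Longrightarrow> card S \<le> card K"
begin

lemma adj_sym: "E u w \<Longrightarrow> E w u" and adj_irrefl: "\<not> E u u"
  using simple by (auto simp: simple_graph_def)

definition replacements :: "'n \<Rightarrow> 'n set" where
  "replacements k = {u. \<not> E u k \<and> (\<forall>k'\<in>K - {k}. E u k')}"

lemma self_in_replacements: "k \<in> K \<Longrightarrow> k \<in> replacements k"
  using clique adj_irrefl by (auto simp: replacements_def is_clique_def)

lemma replacements_disjoint:
  "j \<in> K \<Longrightarrow> k \<noteq> j \<Longrightarrow> replacements k \<inter> replacements j = {}"
  by (auto simp: replacements_def)

lemma replacements_independent:
  assumes "k \<in> K" and u: "u \<in> replacements k" and w: "w \<in> replacements k"
  shows "\<not> E u w"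
proof
  assume "E u w"
  have "u \<notin> K - {k}" "w \<notin> K - {k}" "u \<noteq> w"
    using u w \<open>E u w\<close> adj_irrefl by (auto simp: replacements_def)
  moreover have "card (K - {k}) + 1 = card K"
    using \<open>k \<in> K\<close> card_gt_0_iff[of K] by fastforce
  ultimately have "card (insert u (insert w (K - {k}))) = card K + 1"
    by simp
  moreover have "is_clique E (insert u (insert w (K - {k})))"
    using u w \<open>E u w\<close> clique adj_sym unfolding replacements_def is_clique_def by blast
  ultimately show False
    using maximum[of "insert u (insert w (K - {k}))"] by simp
qed

lemma two_le_card_if_edge:
  assumes "E u w"
  shows "2 \<le> card K"
proof -
  have "is_clique E {u, w}" "u \<noteq> w"
    using assms adj_sym adj_irrefl by (auto simp: is_clique_def)
  then show ?thesis
    using maximum[of "{u, w}"] by simp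
qed

lemma card_clique_neighbours_less: "card {k\<in>K. E u k} < card K"
proof -
  have "{k\<in>K. E u k} \<noteq> K"
  proof
    assume all: "{k\<in>K. E u k} = K"
    then have "u \<notin> K" using adj_irrefl by blast
    moreover have "is_clique E (insert u K)"
      using all clique adj_sym unfolding is_clique_def by blast
    ultimately show False
      using maximum[of "insert u K"] by simp
  qed
  then show ?thesis
    by (simp add: psubset_card_mono psubsetI)
qed

lemma card_clique_neighbours_outside_replacements:
  assumes "u \<notin> (\<Union>k\<in>K. replacements k)"
  shows "card {k\<in>K. E u k} + 2 \<le> card K"
proof -
  have "card {k\<in>K. E u k} \<noteq> card K - 1"
  proof
    assume "card {k\<in>K. E u k} = card K - 1"
    then have "card (K - {k\<in>K. E u k}) = 1"
      using card_clique_neighbours_less[of u] by (simp add: card_Diff_subset)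
    then obtain k where "K - {k\<in>K. E u k} = {k}"
      by (metis card_1_singletonE)
    then have "k \<in> K" "u \<in> replacements k"
      by (auto simp: replacements_def)
    with assms show False by blast
  qed
  with card_clique_neighbours_less[of u] show ?thesis by linarith
qed

lemma sum_degree_le:
  "(\<Sum>k\<in>K. real (degree E k))
     \<le> (real (card K) - 2) * CARD('n) + (\<Sum>k\<in>K. real (card (replacements k)))"
proof -
  define U where "U = (\<Union>k\<in>K. replacements k)"
  have card_U: "real (card U) = (\<Sum>k\<in>K. real (card (replacements k)))"
    unfolding U_def using replacements_disjoint
    by (subst card_UN_disjoint) (auto simp: of_nat_sum)
  have "(\<Sum>k\<in>K. real (degree E k)) = (\<Sum>u\<in>UNIV. real (card {k\<in>K. E u k}))"
    using sum_degree_eq_sum_card_neighbours[OF simple, of K] by (metis of_nat_sum)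
  also have "\<dots> \<le> (\<Sum>u\<in>UNIV. real (card K) - 1 - (if u \<in> U then 0 else 1))"
  proof (rule sum_mono)
    fix u
    show "real (card {k\<in>K. E u k}) \<le> real (card K) - 1 - (if u \<in> U then 0 else 1)"
      using card_clique_neighbours_less[of u] card_clique_neighbours_outside_replacements[of u]
      unfolding U_def by (auto simp: of_nat_less_iff[symmetric] simp del: of_nat_less_iff)
  qed
  also have "\<dots> = (real (card K) - 1) * CARD('n) - real (card (- U))"
    by (simp add: sum_subtractf sum.If_cases Compl_eq)
  also have "real (card (- U)) = CARD('n) - real (card U)"
    by (simp add: Compl_eq_Diff_UNIV card_Diff_subset of_nat_diff card_mono)
  finally show ?thesis
    using card_U by (simp add: algebra_simps)
qed

lemma q_min_le_replacement_pair:
  assumes "k \<in> K" "j \<in> K" "k \<noteq> j"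
  shows "q_min E \<le> CARD('n) - real (card (replacements k)) - real (card (replacements j))"
  using assms replacements_independent self_in_replacements replacements_disjoint
  by (intro q_min_le_independent_pair simple) blast+

lemma three_card_mult_q_min_le:
  assumes "2 \<le> card K"
  shows "3 * card K * q_min E \<le> (3 * real (card K) - 4) * CARD('n)"
proof -
  define a where "a k = real (card (replacements k))" for k
  have "card K * q_min E \<le> (\<Sum>k\<in>K. real (degree E k))"
    using sum_mono[of K "\<lambda>_. q_min E", OF q_min_le_degree[OF simple]] by simp
  also have "\<dots> \<le> (real (card K) - 2) * CARD('n) + sum a K"
    unfolding a_def by (rule sum_degree_le)
  finally have degrees: "card K * q_min E \<le> (real (card K) - 2) * CARD('n) + sum a K" .
  have pairs: "card K * q_min E \<le> real (card K) * CARD('n) - 2 * sum a K"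
    using assms q_min_le_replacement_pair unfolding a_def
    by (intro sum_over_distinct_pairs_bound) auto
  from degrees pairs show ?thesis
    by (simp add: algebra_simps)
qed

end

lemma less_bound_of_three_mult_le:
  fixes s r n c :: real
  assumes "2 \<le> s" "s \<le> r" "0 < n" "3 * s * c \<le> (3 * s - 4) * n"
  shows "c < (1 - 3 / (3 * r - 1)) * n"
proof -
  have "c \<le> n - 4 * n / (3 * s)"
    using assms by (simp add: field_simps)
  also have "\<dots> \<le> n - 4 * n / (3 * r)"
    using assms by (simp add: frac_le)
  also have "\<dots> < n - 3 * n / (3 * r - 1)"
    using assms by (simp add: field_simps)
  finally show ?thesis
    by (simp add: algebra_simps)
qed

theorem theorem6:
  fixes E :: "'n::finite \<Rightarrow> 'n \<Rightarrow> bool" and r :: nat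
  assumes "simple_graph E"
    and "r \<ge> 3"
    and "\<not> contains_clique E (r + 1)"
  shows "q_min E < (1 - 3 / (3 * real r - 1)) * real CARD('n)"
proof -
  obtain K where K: "is_clique E K" and max: "\<And>S. is_clique E S \<Longrightarrow> card S \<le> card K"
    using obtain_maximum_clique[of E] by blast
  interpret maximum_clique E K
    using assms(1) K max by unfold_locales
  have "card K \<le> r"
    using card_clique_le[OF assms(3) K] .
  have "\<exists>s. 2 \<le> s \<and> s \<le> real r \<and> 3 * s * q_min E \<le> (3 * s - 4) * CARD('n)"
  proof (cases "2 \<le> card K")
    case True
    then show ?thesis
      using three_card_mult_q_min_le \<open>card K \<le> r\<close> by (intro exI[of _ "real (card K)"]) auto
  next
    case False
    then have "degree E v = 0" for v
      using two_le_card_if_edge by (auto simp: degree_def)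
    then have "q_min E \<le> 0"
      using q_min_le_degree[OF assms(1), of undefined] by simp
    then show ?thesis
      using assms(2) by (intro exI[of _ 2]) (simp add: mult_nonpos_nonneg)
  qed
  then show ?thesis
    using less_bound_of_three_mult_le by auto
qed

end
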